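(* Let $F$ be a field of characteristic zero and let $\mathcal{Z}=\langle z\rangle$ be the infinite cyclic group. The only Schur rings over $\mathcal{Z}$ are the group ring $F[\mathcal{Z}]$ and the symmetric Schur ring $F[\mathcal{Z}]^{\pm}$.
   Context: For finite $C\subseteq G$, $\overline{C}=\sum_{g\in C}g\in F[G]$ and $C^*=\{g^{-1}\mid g\in C\}$. A Schur ring over a group $G$ is an $F$-subspace $\mathfrak{S}=\operatorname{Span}_F\{\overline{C}\mid C\in\mathcal{D}(\mathfrak{S})\}$ of $F[G]$ where $\mathcal{D}(\mathfrak{S})$ is a partition of $G$ into finite sets such that (i) $\{1\}\in\mathcal{D}(\mathfrak{S})$; (ii) $C\in\mathcal{D}(\mathfrak{S})\Rightarrow C^*\in\mathcal{D}(\mathfrak{S})$; (iii) for all $C,D\in\mathcal{D}(\mathfrak{S})$, $\overline{C}\,\overline{D}=\sum_{E}\lambda_{CDE}\overline{E}$ with finitely many nonzero $\lambda_{CDE}\in F$. The group ring $F[G]$ is the Schur ring with partition into singletons. For abelian $G$, the symmetric Schur ring $F[G]^{\pm}$ is the Schur ring with partition $\{\{g,g^{-1}\}\mid g\in G\}$. *)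

theory Defs
  imports Main
begin

text \<open>The infinite cyclic group Z = <z> is modelled as the additive group int
  (z^n corresponds to n; identity 0; inverse is negation).
  The group algebra F[Z] is modelled as finitely supported functions int => F,
  an element f standing for the formal sum of f(g) g.\<close>

definition fin_supp :: "(int \<Rightarrow> 'a::zero) \<Rightarrow> bool" where
  "fin_supp f \<longleftrightarrow> finite {g. f g \<noteq> 0}"

definition sset :: "int set \<Rightarrow> int \<Rightarrow> 'a::{zero,one}" where
  "sset C = (\<lambda>g. if g \<in> C then 1 else 0)"

definition gmult :: "(int \<Rightarrow> 'a::comm_ring_1) \<Rightarrow> (int \<Rightarrow> 'a) \<Rightarrow> int \<Rightarrow> 'a" where
  "gmult f h = (\<lambda>g. \<Sum>x\<in>{x. f x \<noteq> 0}. f x * h (g - x))"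

definition lin_comb :: "int set set \<Rightarrow> (int set \<Rightarrow> 'a::comm_ring_1) \<Rightarrow> int \<Rightarrow> 'a" where
  "lin_comb D lam = (\<lambda>g. \<Sum>E\<in>{E\<in>D. lam E \<noteq> 0}. lam E * sset E g)"

definition span_sets :: "int set set \<Rightarrow> (int \<Rightarrow> 'a::comm_ring_1) set" where
  "span_sets D = {f. \<exists>lam. finite {E\<in>D. lam E \<noteq> 0} \<and> f = lin_comb D lam}"

definition finite_partition :: "int set set \<Rightarrow> bool" where
  "finite_partition D \<longleftrightarrow>
     (\<forall>C\<in>D. C \<noteq> {} \<and> finite C) \<and>
     (\<forall>C\<in>D. \<forall>C'\<in>D. C \<noteq> C' \<longrightarrow> C \<inter> C' = {}) \<and>
     \<Union>D = UNIV"

definition schur_ring :: "int set set \<Rightarrow> (int \<Rightarrow> 'a::field) set \<Rightarrow> bool" where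
  "schur_ring D S \<longleftrightarrow>
     finite_partition D \<and>
     {0} \<in> D \<and>
     (\<forall>C\<in>D. uminus ` C \<in> D) \<and>
     (\<forall>C\<in>D. \<forall>C'\<in>D. \<exists>lam :: int set \<Rightarrow> 'a.
         finite {E\<in>D. lam E \<noteq> 0} \<and> gmult (sset C) (sset C') = lin_comb D lam) \<and>
     S = span_sets D"

definition group_ring :: "(int \<Rightarrow> 'a::field) set" where
  "group_ring = span_sets {{g} | g. True}"

definition sym_schur_ring :: "(int \<Rightarrow> 'a::field) set" where
  "sym_schur_ring = span_sets {{g, -g} | g. True}"

end

theory Submission
  imports Defs "HOL-Library.Poly_Mapping" "HOL-Computational_Algebra.Primes"
begin

text \<open>The structure constants of a Schur ring over \<open>\<int>\<close> are nonnegative integers, and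
  (in characteristic zero) they are constant on basic sets; hence the integer class functions
  form a subring of the integral group ring \<open>\<int>[\<int>]\<close>. For a basic set \<open>C\<close> and a prime
  \<open>p\<close>, Frobenius gives \<open>C\<^sup>p \<equiv> pC (mod p)\<close> in \<open>\<int>[\<int>]\<close>; since the coefficients of
  \<open>C\<^sup>p\<close> are constant on basic sets, the basic set of \<open>pm\<close> lies in \<open>p\<close> times the basic
  set of \<open>m\<close>. Induction on \<open>|n|\<close> then confines the basic set of \<open>n\<close> to \<open>{n, -n}\<close>.
  Finally, translation by a singleton basic set \<open>{c}\<close> maps basic sets into basic sets,
  which propagates \<open>{1}\<close> resp. \<open>{1, -1}\<close> from \<open>1\<close> to every \<open>n\<close>.\<close>

lemma prime_dvd_power_add_sub:
  fixes a b :: "'a::comm_ring_1"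
  assumes "prime p"
  shows "of_nat p dvd (a + b) ^ p - a ^ p - b ^ p"
proof -
  have "p > 0" using assms prime_gt_0_nat by blast
  then have split: "{..p} = insert 0 (insert p {0<..<p})" by auto
  have "(a + b) ^ p = (\<Sum>k\<le>p. of_nat (p choose k) * a ^ k * b ^ (p - k))"
    by (rule binomial_ring)
  also have "\<dots> = (\<Sum>k\<in>{0<..<p}. of_nat (p choose k) * a ^ k * b ^ (p - k)) + a ^ p + b ^ p"
    unfolding split using \<open>p > 0\<close> by (simp add: algebra_simps)
  finally have "(a + b) ^ p - a ^ p - b ^ p = (\<Sum>k\<in>{0<..<p}. of_nat (p choose k) * a ^ k * b ^ (p - k))"
    by simp
  also have "of_nat p dvd \<dots>"
  proof (intro dvd_sum dvd_mult2)
    fix k assume "k \<in> {0<..<p}"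
    then have "p dvd (p choose k)" using dvd_choose_prime assms by auto
    then show "of_nat p dvd (of_nat (p choose k) :: 'a)" by (elim dvdE) simp
  qed
  finally show ?thesis .
qed

lemma prime_dvd_power_sum_sub:
  fixes f :: "'b \<Rightarrow> 'a::comm_ring_1"
  assumes "prime p" "finite A"
  shows "of_nat p dvd (\<Sum>i\<in>A. f i) ^ p - (\<Sum>i\<in>A. f i ^ p)"
  using assms(2)
proof (induction A rule: finite_induct)
  case empty
  then show ?case using assms(1) prime_gt_0_nat by (simp add: power_0_left)
next
  case (insert x A)
  have "(\<Sum>i\<in>insert x A. f i) ^ p - (\<Sum>i\<in>insert x A. f i ^ p)
      = ((f x + (\<Sum>i\<in>A. f i)) ^ p - f x ^ p - (\<Sum>i\<in>A. f i) ^ p)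
        + ((\<Sum>i\<in>A. f i) ^ p - (\<Sum>i\<in>A. f i ^ p))"
    using insert.hyps by simp
  then show ?case
    by (metis dvd_add prime_dvd_power_add_sub[OF assms(1)] insert.IH)
qed

definition int_sset :: "int set \<Rightarrow> int \<Rightarrow>\<^sub>0 int" where
  "int_sset C = (\<Sum>c\<in>C. Poly_Mapping.single c 1)"

lemma lookup_int_sset: "finite C \<Longrightarrow> Poly_Mapping.lookup (int_sset C) g = sset C g"
  unfolding int_sset_def lookup_sum lookup_single by (simp add: sset_def when_def)

lemma int_sset_zero: "int_sset {0} = 1"
  by (simp add: int_sset_def)

lemma lookup_of_int_mult:
  fixes a :: "'b::monoid_add \<Rightarrow>\<^sub>0 int"
  shows "Poly_Mapping.lookup (of_int s * a) g = s * Poly_Mapping.lookup a g"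
proof -
  have "Poly_Mapping.lookup (Poly_Mapping.map ((*) s) a) g = s * Poly_Mapping.lookup a g"
    by transfer (simp add: when_def)
  then show ?thesis by (simp flip: single_of_int add: mult_map_scale_conv_mult)
qed

lemma lookup_int_sset_mult:
  assumes "finite C" "finite C'"
  shows "Poly_Mapping.lookup (int_sset C * int_sset C') g = int (card {x\<in>C. g - x \<in> C'})"
proof -
  have "Poly_Mapping.lookup (int_sset C * int_sset C') g
      = (\<Sum>c\<in>C. \<Sum>c'\<in>C'. if c' = g - c then 1 else 0)"
    unfolding int_sset_def sum_product mult_single lookup_sum lookup_single
    by (intro sum.cong) (auto simp: when_def)
  also have "\<dots> = (\<Sum>c\<in>C. if g - c \<in> C' then 1 else 0)"
    using assms by simp
  also have "\<dots> = int (card {x\<in>C. g - x \<in> C'})"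
    using assms by (simp add: sum.If_cases Int_def)
  finally show ?thesis .
qed

lemma prime_dvd_lookup_int_sset_power:
  assumes "prime p" "finite C"
  shows "int p dvd Poly_Mapping.lookup (int_sset C ^ p) g - sset ((*) (int p) ` C) g"
proof -
  have "p > 0" using assms(1) prime_gt_0_nat by blast
  have "Poly_Mapping.single c (1::int) ^ n = Poly_Mapping.single (int n * c) 1" for c n
    by (induction n) (simp_all add: mult_single algebra_simps)
  then have "int_sset ((*) (int p) ` C) = (\<Sum>c\<in>C. Poly_Mapping.single c 1 ^ p)"
    using \<open>p > 0\<close> by (simp add: int_sset_def sum.reindex inj_on_def)
  then have "of_nat p dvd int_sset C ^ p - int_sset ((*) (int p) ` C)"
    using prime_dvd_power_sum_sub[OF assms, of "\<lambda>c. Poly_Mapping.single c 1"]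
    by (simp add: int_sset_def)
  then obtain Q where "int_sset C ^ p - int_sset ((*) (int p) ` C) = of_nat p * Q"
    by (rule dvdE)
  then have "Poly_Mapping.lookup (int_sset C ^ p) g - Poly_Mapping.lookup (int_sset ((*) (int p) ` C)) g
      = int p * Poly_Mapping.lookup Q g"
    by (metis lookup_minus lookup_of_int_mult of_int_of_nat_eq)
  then show ?thesis using assms(2) by (simp add: lookup_int_sset)
qed

lemma exists_prime_dvd_int:
  fixes m :: int
  assumes "\<bar>m\<bar> \<noteq> 1"
  shows "\<exists>p. prime p \<and> int p dvd m"
  using prime_factor_nat[of "nat \<bar>m\<bar>"] assms by auto

text \<open>\<open>card {x \<in> C. g - x \<in> C'}\<close> is the coefficient of \<open>g\<close> in the product of the sums of
  \<open>C\<close> and \<open>C'\<close>.\<close>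

locale schur_partition =
  fixes D :: "int set set"
  assumes partition: "finite_partition D"
    and zero_in_D: "{0} \<in> D"
    and uminus_in_D: "C \<in> D \<Longrightarrow> uminus ` C \<in> D"
    and count_invariant: "\<lbrakk>C \<in> D; C' \<in> D; E \<in> D; g \<in> E; h \<in> E\<rbrakk> \<Longrightarrow>
        card {x\<in>C. h - x \<in> C'} = card {x\<in>C. g - x \<in> C'}"
begin

definition basic_set :: "int \<Rightarrow> int set" where
  "basic_set g = (THE E. E \<in> D \<and> g \<in> E)"

lemma nonempty_in_D: "C \<in> D \<Longrightarrow> C \<noteq> {}"
  and finite_in_D: "C \<in> D \<Longrightarrow> finite C"
  and disjoint_in_D: "C \<in> D \<Longrightarrow> C' \<in> D \<Longrightarrow> C \<noteq> C' \<Longrightarrow> C \<inter> C' = {}"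
  and Union_D: "\<Union>D = UNIV"
  using partition unfolding finite_partition_def by blast+

lemma ex1_basic_set: "\<exists>!E. E \<in> D \<and> g \<in> E"
proof -
  obtain E where "E \<in> D" "g \<in> E" using Union_D by blast
  then show ?thesis using disjoint_in_D by blast
qed

lemma basic_set_in_D: "basic_set g \<in> D"
  and mem_basic_set: "g \<in> basic_set g"
  using theI'[OF ex1_basic_set] unfolding basic_set_def by blast+

lemma basic_set_eq: "E \<in> D \<Longrightarrow> g \<in> E \<Longrightarrow> basic_set g = E"
  unfolding basic_set_def by (rule the1_equality[OF ex1_basic_set]) simp

lemma finite_basic_set: "finite (basic_set g)"
  by (rule finite_in_D[OF basic_set_in_D])

lemma basic_set_eq_iff: "h \<in> basic_set g \<longleftrightarrow> basic_set h = basic_set g"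
  using basic_set_eq[OF basic_set_in_D, of h g] mem_basic_set[of h] by auto

lemma basic_set_zero: "basic_set 0 = {0}"
  by (rule basic_set_eq[OF zero_in_D]) simp

lemma basic_set_uminus: "basic_set (- g) = uminus ` basic_set g"
  by (rule basic_set_eq) (simp_all add: uminus_in_D basic_set_in_D mem_basic_set)

lemma range_basic_set: "range basic_set = D"
proof -
  have "C \<in> range basic_set" if "C \<in> D" for C
  proof -
    obtain g where "g \<in> C" using nonempty_in_D[OF \<open>C \<in> D\<close>] by blast
    then have "C = basic_set g" using basic_set_eq[OF \<open>C \<in> D\<close>] by simp
    then show ?thesis by simp
  qed
  then show ?thesis using basic_set_in_D by blast
qed

definition constant_on_basic_sets :: "(int \<Rightarrow>\<^sub>0 int) \<Rightarrow> bool" where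
  "constant_on_basic_sets a \<longleftrightarrow>
     (\<forall>g. \<forall>h\<in>basic_set g. Poly_Mapping.lookup a h = Poly_Mapping.lookup a g)"

lemma constant_on_basic_sets_int_sset_mult:
  assumes "C \<in> D" "C' \<in> D"
  shows "constant_on_basic_sets (int_sset C * int_sset C')"
  unfolding constant_on_basic_sets_def
proof (intro allI ballI)
  fix g h assume "h \<in> basic_set g"
  then show "Poly_Mapping.lookup (int_sset C * int_sset C') h
      = Poly_Mapping.lookup (int_sset C * int_sset C') g"
    using count_invariant[OF assms basic_set_in_D mem_basic_set]
    by (simp add: lookup_int_sset_mult finite_in_D assms)
qed

lemma constant_on_basic_sets_int_sset:
  assumes "E \<in> D"
  shows "constant_on_basic_sets (int_sset E)"
  using constant_on_basic_sets_int_sset_mult[OF assms zero_in_D] by (simp add: int_sset_zero)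

lemma constant_on_basic_sets_one: "constant_on_basic_sets 1"
  using constant_on_basic_sets_int_sset[OF zero_in_D] by (simp add: int_sset_zero)

lemma constant_on_basic_sets_sum:
  assumes "\<And>i. i \<in> I \<Longrightarrow> constant_on_basic_sets (f i)"
  shows "constant_on_basic_sets (\<Sum>i\<in>I. f i)"
  using assms unfolding constant_on_basic_sets_def by (simp add: lookup_sum)

lemma constant_on_basic_sets_of_int_mult:
  "constant_on_basic_sets a \<Longrightarrow> constant_on_basic_sets (of_int s * a)"
  unfolding constant_on_basic_sets_def by (simp add: lookup_of_int_mult)

lemma constant_on_basic_sets_imp_sum_int_sset:
  assumes "constant_on_basic_sets a"
  shows "\<exists>c. a = (\<Sum>E\<in>basic_set ` Poly_Mapping.keys a. of_int (c E) * int_sset E)"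
proof -
  have const: "Poly_Mapping.lookup a h = Poly_Mapping.lookup a g" if "h \<in> basic_set g" for g h
    using assms that unfolding constant_on_basic_sets_def by blast
  define c where "c E = Poly_Mapping.lookup a (SOME g. g \<in> E)" for E
  have c_basic_set: "c (basic_set g) = Poly_Mapping.lookup a g" for g
  proof -
    have "(SOME h. h \<in> basic_set g) \<in> basic_set g"
      by (rule someI[of "\<lambda>h. h \<in> basic_set g"]) (rule mem_basic_set)
    then show ?thesis unfolding c_def by (rule const)
  qed
  have image_keys:
    "basic_set k \<in> basic_set ` Poly_Mapping.keys a \<longleftrightarrow> k \<in> Poly_Mapping.keys a" for k
  proof
    assume "basic_set k \<in> basic_set ` Poly_Mapping.keys a"
    then obtain g where "g \<in> Poly_Mapping.keys a" "k \<in> basic_set g"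
      using basic_set_eq_iff by blast
    then show "k \<in> Poly_Mapping.keys a" using const by (simp add: in_keys_iff)
  qed blast
  have "Poly_Mapping.lookup (\<Sum>E\<in>basic_set ` Poly_Mapping.keys a. of_int (c E) * int_sset E) k
      = Poly_Mapping.lookup a k" for k
  proof -
    have "Poly_Mapping.lookup (\<Sum>E\<in>basic_set ` Poly_Mapping.keys a. of_int (c E) * int_sset E) k
        = (\<Sum>E\<in>basic_set ` Poly_Mapping.keys a. if E = basic_set k then c E else 0)"
      unfolding lookup_sum lookup_of_int_mult
    proof (intro sum.cong refl)
      fix E assume "E \<in> basic_set ` Poly_Mapping.keys a"
      then obtain g where "E = basic_set g" by blast
      then have "k \<in> E \<longleftrightarrow> E = basic_set k" using basic_set_eq_iff by auto
      then show "c E * Poly_Mapping.lookup (int_sset E) k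
          = (if E = basic_set k then c E else 0)"
        using \<open>E = basic_set g\<close> by (simp add: lookup_int_sset finite_basic_set sset_def)
    qed
    also have "\<dots> = Poly_Mapping.lookup a k"
      using image_keys[of k] c_basic_set[of k] by (simp add: in_keys_iff)
    finally show ?thesis .
  qed
  then have "a = (\<Sum>E\<in>basic_set ` Poly_Mapping.keys a. of_int (c E) * int_sset E)"
    by (intro poly_mapping_eqI) simp
  then show ?thesis by blast
qed

lemma constant_on_basic_sets_mult:
  assumes "constant_on_basic_sets a" "constant_on_basic_sets b"
  shows "constant_on_basic_sets (a * b)"
proof -
  obtain c d
    where "a = (\<Sum>E\<in>basic_set ` Poly_Mapping.keys a. of_int (c E) * int_sset E)"
      and "b = (\<Sum>E\<in>basic_set ` Poly_Mapping.keys b. of_int (d E) * int_sset E)"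
    using assms constant_on_basic_sets_imp_sum_int_sset by blast
  then have "a * b = (\<Sum>E\<in>basic_set ` Poly_Mapping.keys a. of_int (c E) * int_sset E)
      * (\<Sum>E\<in>basic_set ` Poly_Mapping.keys b. of_int (d E) * int_sset E)"
    by (rule arg_cong2)
  also have "\<dots> = (\<Sum>E\<in>basic_set ` Poly_Mapping.keys a. \<Sum>E'\<in>basic_set ` Poly_Mapping.keys b.
      of_int (c E * d E') * (int_sset E * int_sset E'))"
    by (simp add: sum_product algebra_simps)
  finally show ?thesis
    by (auto simp del: of_int_mult
        intro!: constant_on_basic_sets_sum constant_on_basic_sets_of_int_mult
        constant_on_basic_sets_int_sset_mult basic_set_in_D)
qed

lemma constant_on_basic_sets_int_sset_power:
  "E \<in> D \<Longrightarrow> constant_on_basic_sets (int_sset E ^ n)"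
  by (induction n)
    (simp_all add: constant_on_basic_sets_one constant_on_basic_sets_mult
      constant_on_basic_sets_int_sset)

lemma basic_set_mult_prime:
  assumes "prime p"
  shows "basic_set (int p * m) \<subseteq> (*) (int p) ` basic_set m"
proof
  fix x assume x: "x \<in> basic_set (int p * m)"
  let ?a = "Poly_Mapping.lookup (int_sset (basic_set m) ^ p)"
    and ?pC = "(*) (int p) ` basic_set m"
  have "?a x = ?a (int p * m)"
    using constant_on_basic_sets_int_sset_power[OF basic_set_in_D] x
    unfolding constant_on_basic_sets_def by blast
  moreover have "int p * m \<in> ?pC" using mem_basic_set by blast
  then have "sset ?pC (int p * m) = (1::int)" by (simp add: sset_def)
  moreover have "int p dvd (?a (int p * m) - sset ?pC (int p * m)) - (?a x - sset ?pC x)"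
    by (intro dvd_diff prime_dvd_lookup_int_sset_power[OF assms finite_basic_set])
  ultimately have "int p dvd sset ?pC x - 1" by simp
  moreover have "\<not> int p dvd -1"
    using assms not_prime_1 by auto
  ultimately show "x \<in> ?pC" by (auto simp: sset_def split: if_splits)
qed

lemma prime_dvd_mem_basic_set:
  assumes "prime p" "int p dvd n" "x \<in> basic_set n"
  shows "int p dvd x"
proof -
  obtain m where "n = int p * m" using assms(2) by (rule dvdE)
  then obtain w where "x = int p * w"
    using basic_set_mult_prime[OF assms(1), of m] assms(3) by blast
  then show ?thesis by simp
qed

lemma basic_set_subset: "basic_set n \<subseteq> {n, - n}"
proof (induction "nat \<bar>n\<bar>" arbitrary: n rule: less_induct)
  case less
  consider "n = 0" | "\<bar>n\<bar> = 1" | "n \<noteq> 0" "\<bar>n\<bar> \<noteq> 1" by blast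
  then show ?case
  proof cases
    case 1
    then show ?thesis by (simp add: basic_set_zero)
  next
    case 2
    have "\<bar>x\<bar> = 1" if "x \<in> basic_set n" for x
    proof (rule ccontr)
      assume "\<bar>x\<bar> \<noteq> 1"
      then obtain p where "prime p" "int p dvd x" using exists_prime_dvd_int by blast
      moreover have "n \<in> basic_set x" using that basic_set_eq_iff mem_basic_set by metis
      ultimately have "int p dvd n" by (rule prime_dvd_mem_basic_set)
      then have "int p dvd 1" using 2 by (metis dvd_abs_iff)
      then have "p = 1" by (metis of_nat_1 int_dvd_int_iff nat_dvd_1_iff_1)
      then show False using \<open>prime p\<close> by simp
    qed
    then show ?thesis using 2 abs_eq_iff[of _ n] by auto
  next
    case 3
    then obtain p where p: "prime p" and "int p dvd n" using exists_prime_dvd_int by blast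
    from \<open>int p dvd n\<close> obtain m where n: "n = int p * m" by (rule dvdE)
    have "\<bar>n\<bar> = int p * \<bar>m\<bar>" using n by (simp add: abs_mult)
    moreover have "2 * \<bar>m\<bar> \<le> int p * \<bar>m\<bar>"
      using prime_ge_2_nat[OF p] by (intro mult_right_mono) auto
    moreover have "\<bar>m\<bar> > 0" using 3 n by auto
    ultimately have "\<bar>m\<bar> < \<bar>n\<bar>" by linarith
    then have "basic_set m \<subseteq> {m, - m}" using less by simp
    then have "(*) (int p) ` basic_set m \<subseteq> {n, - n}" using n by auto
    moreover have "basic_set n \<subseteq> (*) (int p) ` basic_set m"
      using basic_set_mult_prime[OF p, of m] n by simp
    ultimately show ?thesis by (rule order_trans[rotated])
  qed
qed

lemma singleton_basic_set_shift:
  assumes "basic_set c = {c}" "h \<in> basic_set g" "g - c \<in> basic_set d"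
  shows "h - c \<in> basic_set d"
proof -
  have "card {x\<in>basic_set c. k - x \<in> basic_set d} = (if k - c \<in> basic_set d then 1 else 0)"
    for k
  proof -
    have "{x\<in>basic_set c. k - x \<in> basic_set d} = (if k - c \<in> basic_set d then {c} else {})"
      using assms(1) by auto
    then show ?thesis by simp
  qed
  moreover have
    "card {x\<in>basic_set c. h - x \<in> basic_set d} = card {x\<in>basic_set c. g - x \<in> basic_set d}"
    using count_invariant[OF basic_set_in_D basic_set_in_D basic_set_in_D mem_basic_set assms(2)] .
  ultimately show ?thesis using assms(3) by (simp split: if_splits)
qed

lemma basic_set_one_cases: "basic_set 1 = {1} \<or> basic_set 1 = {1, -1}"
  using basic_set_subset[of 1] mem_basic_set[of 1] by auto

lemma basic_set_eq_singleton:
  assumes "basic_set 1 = {1}"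
  shows "basic_set n = {n}"
proof -
  have nonneg: "basic_set (int k) = {int k}" for k
  proof (induction k)
    case 0
    then show ?case by (simp add: basic_set_zero)
  next
    case (Suc k)
    have "h = int (Suc k)" if "h \<in> basic_set (int (Suc k))" for h
      using singleton_basic_set_shift[OF Suc.IH that, of 1] assms mem_basic_set[of 1] by simp
    then show ?case using mem_basic_set by blast
  qed
  show ?thesis
  proof (cases "n \<ge> 0")
    case True
    then show ?thesis using nonneg[of "nat n"] by simp
  next
    case False
    then show ?thesis using nonneg[of "nat (- n)"] basic_set_uminus[of "- n"] by simp
  qed
qed

lemma basic_set_eq_pair:
  assumes "basic_set 1 = {1, -1}"
  shows "basic_set n = {n, - n}"
proof -
  have nonneg: "basic_set (int k) = {int k, - int k}" for k
  proof (induction k)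
    case 0
    then show ?case by (simp add: basic_set_zero)
  next
    case (Suc k)
    show ?case
    proof (rule ccontr)
      assume not_pair: "basic_set (int (Suc k)) \<noteq> {int (Suc k), - int (Suc k)}"
      then have "basic_set (int (Suc k)) = {int (Suc k)}"
        using basic_set_subset[of "int (Suc k)"] mem_basic_set[of "int (Suc k)"] by auto
      moreover have "- int k \<in> basic_set (int k)" using Suc.IH by simp
      moreover have "int k - int (Suc k) \<in> basic_set 1" using assms by simp
      ultimately have "- int k - int (Suc k) \<in> basic_set 1"
        by (rule singleton_basic_set_shift)
      then have "k = 0" using assms by auto
      then show False using not_pair assms by simp
    qed
  qed
  show ?thesis
  proof (cases "n \<ge> 0")
    case True
    then show ?thesis using nonneg[of "nat n"] by simp
  next
    case False
    then show ?thesis using nonneg[of "nat (- n)"] basic_set_uminus[of "- n"] by auto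
  qed
qed

lemma D_singletons_or_pairs: "D = {{g} | g. True} \<or> D = {{g, - g} | g. True}"
proof (cases "basic_set 1 = {1}")
  case True
  then have "basic_set = (\<lambda>g. {g})" by (intro ext) (rule basic_set_eq_singleton)
  then show ?thesis using range_basic_set by auto
next
  case False
  then have "basic_set 1 = {1, - 1}" using basic_set_one_cases by blast
  then have "basic_set = (\<lambda>g. {g, - g})" by (intro ext) (rule basic_set_eq_pair)
  then show ?thesis using range_basic_set by auto
qed

end

lemma lin_comb_apply:
  fixes lam :: "int set \<Rightarrow> 'a::comm_ring_1"
  assumes "finite_partition D" "finite {E\<in>D. lam E \<noteq> 0}" "E \<in> D" "g \<in> E"
  shows "lin_comb D lam g = lam E"
proof -
  have "g \<in> E' \<longleftrightarrow> E' = E" if "E' \<in> D" for E'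
    using assms(1,3,4) that unfolding finite_partition_def by blast
  then have "lam E' * sset E' g = (if E' = E then lam E' else 0)" if "E' \<in> D" for E'
    using that by (simp add: sset_def)
  then have "lin_comb D lam g = (\<Sum>E'\<in>{E\<in>D. lam E \<noteq> 0}. if E' = E then lam E' else 0)"
    unfolding lin_comb_def by (intro sum.cong) auto
  also have "\<dots> = lam E" using assms(2,3) by simp
  finally show ?thesis .
qed

lemma gmult_sset_apply:
  assumes "finite C"
  shows "gmult (sset C) (sset C') g = (of_nat (card {x\<in>C. g - x \<in> C'}) :: 'a::comm_ring_1)"
proof -
  have "{x. (sset C x :: 'a) \<noteq> 0} = C" by (auto simp: sset_def)
  then have "gmult (sset C) (sset C') g = (\<Sum>x\<in>C. if g - x \<in> C' then 1 else 0 :: 'a)"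
    unfolding gmult_def by (intro sum.cong) (auto simp: sset_def)
  also have "\<dots> = of_nat (card {x\<in>C. g - x \<in> C'})"
    using assms by (simp add: sum.If_cases Int_def)
  finally show ?thesis .
qed

lemma schur_ring_imp_schur_partition:
  assumes "schur_ring D (S :: (int \<Rightarrow> 'a::field_char_0) set)"
  shows "schur_partition D"
proof
  show partition: "finite_partition D" and "{0} \<in> D"
    and "\<And>C. C \<in> D \<Longrightarrow> uminus ` C \<in> D"
    using assms unfolding schur_ring_def by blast+
  fix C C' E g h assume "C \<in> D" "C' \<in> D" "E \<in> D" "g \<in> E" "h \<in> E"
  then obtain lam :: "int set \<Rightarrow> 'a"
    where lam: "finite {E\<in>D. lam E \<noteq> 0}" "gmult (sset C) (sset C') = lin_comb D lam"
    using assms unfolding schur_ring_def by blast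
  have "finite C" using partition \<open>C \<in> D\<close> unfolding finite_partition_def by blast
  then have "of_nat (card {x\<in>C. k - x \<in> C'}) = lam E" if "k \<in> E" for k
    using gmult_sset_apply lin_comb_apply[OF partition lam(1) \<open>E \<in> D\<close> that] lam(2) by metis
  then show "card {x\<in>C. h - x \<in> C'} = card {x\<in>C. g - x \<in> C'}"
    using \<open>g \<in> E\<close> \<open>h \<in> E\<close> of_nat_eq_iff by metis
qed

theorem theorem3p2:
  fixes D :: "int set set" and S :: "(int \<Rightarrow> 'a::field_char_0) set"
  assumes "schur_ring D S"
  shows "S = group_ring \<or> S = sym_schur_ring"
proof -
  interpret schur_partition D
    using assms by (rule schur_ring_imp_schur_partition)
  have "S = span_sets D" using assms unfolding schur_ring_def by blast
  then show ?thesis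
    using D_singletons_or_pairs unfolding group_ring_def sym_schur_ring_def by auto
qed

end
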